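(* Let $r\ge2$ be even and let $S=(x_1,x_2,x_3)$ be a sequence in $U(2^r)$ with $x_i\equiv 1\pmod 4$ for $i=1,2,3$ (i.e. its image under $f_{2^r,4}$ is $(1,1,1)$). Then $S$ has no $S(2^r)^*$-weighted zero-sum subsequence.
   Context: For a natural number $m$, $\mathbb Z_m=\mathbb Z/m\mathbb Z$, $U(m)$ its group of units, $S(m)=\{x^2:x\in\mathbb Z_m\}$, $S(m)^*=S(m)\setminus\{0\}$. For $m\mid n$, $f_{n,m}$ is the natural map $\mathbb Z_n\to\mathbb Z_m$. For $A\subseteq\mathbb Z_m$, a sequence $(y_1,\dots,y_k)$ ($k\ge1$) is an $A$-weighted zero-sum sequence if there exist $a_i\in A$ with $\sum a_iy_i=0$; a sequence has an $A$-weighted zero-sum subsequence if some nonempty subsequence is an $A$-weighted zero-sum sequence. *)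

theory Defs
  imports Main "HOL-Library.Sublist"
begin

text \<open>Elements of Z_m are represented by their canonical integer representatives in {0..<m}.\<close>

definition Zm :: "nat \<Rightarrow> int set" where
  "Zm m = {0..<int m}"

definition units_mod :: "nat \<Rightarrow> int set" where
  "units_mod m = {x \<in> Zm m. coprime x (int m)}"

definition squares_mod :: "nat \<Rightarrow> int set" where
  "squares_mod m = {(x^2) mod int m | x. x \<in> Zm m}"

definition squares_mod_star :: "nat \<Rightarrow> int set" where
  "squares_mod_star m = squares_mod m - {0}"

definition weighted_zero_sum :: "nat \<Rightarrow> int set \<Rightarrow> int list \<Rightarrow> bool" where
  "weighted_zero_sum m A ys \<longleftrightarrow> ys \<noteq> [] \<and>
     (\<exists>a :: nat \<Rightarrow> int. (\<forall>i<length ys. a i \<in> A) \<and>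
        (\<Sum>i<length ys. a i * ys ! i) mod int m = 0)"

definition has_weighted_zero_sum_subseq :: "nat \<Rightarrow> int set \<Rightarrow> int list \<Rightarrow> bool" where
  "has_weighted_zero_sum_subseq m A ys \<longleftrightarrow>
     (\<exists>zs. subseq zs ys \<and> weighted_zero_sum m A zs)"

end

theory Submission
  imports Defs
begin

text \<open>A nonzero square class modulo \<open>4^k\<close> is \<open>x\<^sup>2 mod 4^k\<close> with \<open>4^k \<nmid> x\<^sup>2\<close>. If some
  \<open>x\<^sub>i\<close> is odd, then modulo 4 the sum \<open>\<Sum> x\<^sub>i\<^sup>2 y\<^sub>i\<close> with \<open>y\<^sub>i \<equiv> 1\<close> counts the odd \<open>x\<^sub>i\<close>, a number
  in \<open>{1,2,3}\<close>, so it is not even divisible by 4. Otherwise all \<open>x\<^sub>i\<close> are even and dividing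
  everything by 4 lowers \<open>k\<close>. Since \<open>r\<close> is even, \<open>2^r = 4^(r/2)\<close> and this descent applies.\<close>

lemma square_times_1_mod_4:
  fixes x y :: int
  assumes "y mod 4 = 1"
  shows "(x\<^sup>2 * y) mod 4 = (if odd x then 1 else 0)"
proof (cases "odd x")
  case True
  then obtain k where "x = 2 * k + 1" by (metis oddE)
  then have "x\<^sup>2 * y = 4 * ((k\<^sup>2 + k) * y) + y" by (simp add: power2_eq_square algebra_simps)
  with True assms show ?thesis by simp
next
  case False
  then obtain k where "x = 2 * k" by blast
  then have even_case: "x\<^sup>2 * y = 4 * (k\<^sup>2 * y)" by (simp add: power2_eq_square algebra_simps)
  have "x\<^sup>2 * y mod 4 = 0" unfolding even_case by simp
  with False show ?thesis by simp
qed

lemma sum_squares_times_1_mod_4: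
  fixes x y :: "'a \<Rightarrow> int"
  assumes "finite I" and "\<forall>i\<in>I. y i mod 4 = 1"
  shows "(\<Sum>i\<in>I. (x i)\<^sup>2 * y i) mod 4 = int (card {i\<in>I. odd (x i)}) mod 4"
proof -
  have "(\<Sum>i\<in>I. (x i)\<^sup>2 * y i) mod 4 = (\<Sum>i\<in>I. (x i)\<^sup>2 * y i mod 4) mod 4"
    by (simp add: mod_sum_eq)
  also have "(\<Sum>i\<in>I. (x i)\<^sup>2 * y i mod 4) = (\<Sum>i\<in>I. if odd (x i) then 1 else 0)"
    using assms(2) by (intro sum.cong refl square_times_1_mod_4) auto
  also have "\<dots> = int (card {i\<in>I. odd (x i)})"
    using assms(1) by (simp add: sum.If_cases Int_def conj_commute)
  finally show ?thesis .
qed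

lemma not_power_4_dvd_sum_squares_times_1_mod_4:
  fixes x y :: "'a \<Rightarrow> int"
  assumes "finite I" "I \<noteq> {}" "card I < 4"
    and "\<forall>i\<in>I. y i mod 4 = 1"
    and "\<forall>i\<in>I. \<not> 4 ^ k dvd (x i)\<^sup>2"
  shows "\<not> 4 ^ k dvd (\<Sum>i\<in>I. (x i)\<^sup>2 * y i)"
  using assms(5)
proof (induction k arbitrary: x)
  case 0
  with \<open>I \<noteq> {}\<close> show ?case by auto
next
  case (Suc k)
  show ?case
  proof (cases "\<exists>i\<in>I. odd (x i)")
    case True
    have "card {i\<in>I. odd (x i)} \<le> card I"
      using \<open>finite I\<close> by (intro card_mono) auto
    moreover have "card {i\<in>I. odd (x i)} \<noteq> 0"
      using True \<open>finite I\<close> by auto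
    ultimately have "\<not> 4 dvd (\<Sum>i\<in>I. (x i)\<^sup>2 * y i)"
      using sum_squares_times_1_mod_4[OF assms(1,4), of x] \<open>card I < 4\<close>
      by (auto simp: dvd_eq_mod_eq_0)
    moreover have "(4::int) dvd 4 ^ Suc k" by simp
    ultimately show ?thesis using dvd_trans by blast
  next
    case False
    define x' where "x' i = x i div 2" for i
    have x_eq: "(x i)\<^sup>2 = 4 * (x' i)\<^sup>2" if "i \<in> I" for i
      using False that unfolding x'_def by (auto simp: power2_eq_square elim!: evenE)
    have "\<forall>i\<in>I. \<not> 4 ^ k dvd (x' i)\<^sup>2"
      using Suc.prems x_eq by auto
    then have "\<not> 4 ^ k dvd (\<Sum>i\<in>I. (x' i)\<^sup>2 * y i)"
      by (rule Suc.IH)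
    moreover have "(\<Sum>i\<in>I. (x i)\<^sup>2 * y i) = 4 * (\<Sum>i\<in>I. (x' i)\<^sup>2 * y i)"
      by (simp add: x_eq sum_distrib_left mult.assoc cong: sum.cong)
    ultimately show ?thesis by simp
  qed
qed

lemma weighted_zero_sum_squares_mod_star:
  assumes "weighted_zero_sum m (squares_mod_star m) ys"
  obtains x where "ys \<noteq> []" and "\<forall>i<length ys. \<not> int m dvd (x i)\<^sup>2"
    and "int m dvd (\<Sum>i<length ys. (x i)\<^sup>2 * ys ! i)"
proof -
  obtain a where ys: "ys \<noteq> []" and a: "\<forall>i<length ys. a i \<in> squares_mod_star m"
    and zero: "(\<Sum>i<length ys. a i * ys ! i) mod int m = 0"
    using assms unfolding weighted_zero_sum_def by (elim conjE exE)
  have "\<forall>i<length ys. \<exists>v. a i = v\<^sup>2 mod int m \<and> a i \<noteq> 0"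
    using a unfolding squares_mod_star_def squares_mod_def by blast
  then obtain x where x: "\<forall>i<length ys. a i = (x i)\<^sup>2 mod int m \<and> a i \<noteq> 0"
    by metis
  have "(\<Sum>i<length ys. (x i)\<^sup>2 * ys ! i) mod int m
      = (\<Sum>i<length ys. (x i)\<^sup>2 mod int m * ys ! i mod int m) mod int m"
    by (simp add: mod_sum_eq mod_mult_left_eq)
  also have "\<dots> = (\<Sum>i<length ys. a i * ys ! i) mod int m"
    using x by (simp add: mod_sum_eq)
  finally have "int m dvd (\<Sum>i<length ys. (x i)\<^sup>2 * ys ! i)"
    using zero by (simp add: dvd_eq_mod_eq_0)
  moreover have "\<forall>i<length ys. \<not> int m dvd (x i)\<^sup>2"
    using x by (auto simp: dvd_eq_mod_eq_0)
  ultimately show ?thesis using ys that by blast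
qed

theorem mainTheorem7:
  fixes r :: nat and S :: "int list"
  assumes "r \<ge> 2" and "even r"
    and "length S = 3"
    and "\<forall>x\<in>set S. x \<in> units_mod (2^r)"
    and "\<forall>x\<in>set S. x mod 4 = 1"
  shows "\<not> has_weighted_zero_sum_subseq (2^r) (squares_mod_star (2^r)) S"
proof
  assume "has_weighted_zero_sum_subseq (2^r) (squares_mod_star (2^r)) S"
  then obtain zs where sub: "subseq zs S"
    and zero_sum: "weighted_zero_sum (2^r) (squares_mod_star (2^r)) zs"
    unfolding has_weighted_zero_sum_subseq_def by blast
  from zero_sum obtain x where "zs \<noteq> []" and "\<forall>i<length zs. \<not> int (2^r) dvd (x i)\<^sup>2"
    and "int (2^r) dvd (\<Sum>i<length zs. (x i)\<^sup>2 * zs ! i)"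
    by (rule weighted_zero_sum_squares_mod_star)
  moreover have "int (2^r) = (4::int) ^ (r div 2)"
    using \<open>even r\<close> by (auto simp: power_mult elim!: evenE)
  moreover have "length zs < 4"
    using list_emb_length[OF sub] \<open>length S = 3\<close> by simp
  moreover have "\<forall>i<length zs. zs ! i mod 4 = 1"
    using list_emb_set[OF sub] assms(5) nth_mem by fastforce
  ultimately show False
    using not_power_4_dvd_sum_squares_times_1_mod_4[of "{..<length zs}" "\<lambda>i. zs ! i" "r div 2" x]
    by auto
qed

end
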